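(* Let $t\ge1$, $F=\mathbb{F}_{2^t}$, $A\subseteq F$ with $|A|=n\le 2^t$, and let $k$ satisfy $r=n-k\ge 2$. Let $\alpha^*\in A$, choose $z_1,\dots,z_t\in F$ such that $\beta_i:=\alpha^*-z_i$ ($i=1,\dots,t$) form a basis of $F$ over $\mathbb{F}_2$, and set $g_i(x)=\beta_i(x-z_i)$. Then the check polynomials $g_1,\dots,g_t$ yield a linear repair scheme over $\mathbb{F}_2$ for the codeword symbol $f(\alpha^* )$ of the Reed-Solomon code $\mathrm{RS}(A,k)$ with repair bandwidth at most $(n-1)(t-1)$ bits. Moreover, when $n=|F|=2^t$ and $r=2$, this repair bandwidth is optimal, i.e. no linear repair scheme over $\mathbb{F}_2$ for a single erased symbol has bandwidth smaller than $(n-1)(t-1)$ bits.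
   Context: $\mathrm{RS}(A,k)=\{(f(\alpha))_{\alpha\in A} : f\in F[x],\ \deg f<k\}$, with $f(\alpha)$ stored at node $\alpha$. Every polynomial $g\in F[x]$ of degree at most $r-1$ gives a dual codeword (a check), i.e. $\sum_{\alpha\in A}\lambda_\alpha g(\alpha)f(\alpha)=0$ for fixed nonzero multipliers $\lambda_\alpha$. Given checks $g_1,\dots,g_t$ of degree at most $r-1$ with $\mathrm{rank}_{\mathbb{F}_2}\{g_i(\alpha^* )\}_i=t$, one obtains a linear repair scheme over $\mathbb{F}_2$: applying the trace $\mathrm{Tr}_{F/\mathbb{F}_2}$ to the check equations, the replacement node recovers the $t$ independent traces $\mathrm{Tr}(\lambda_{\alpha^*}g_i(\alpha^* )f(\alpha^* ))$ by downloading from node $\alpha\ne\alpha^*$ exactly $b_\alpha=\mathrm{rank}_{\mathbb{F}_2}\{g_1(\alpha),\dots,g_t(\alpha)\}$ sub-symbols; the repair bandwidth is $\sum_{\alpha\ne\alpha^*}b_\alpha$ sub-symbols. In general a linear repair scheme over $\mathbb{F}_2$ is one where each node sends $\mathbb{F}_2$-linear functions of its symbol and $f(\alpha^* )$ is recovered $\mathbb{F}_2$-linearly; its bandwidth is the total number of bits downloaded. *)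

theory Defs
  imports "HOL-Computational_Algebra.Polynomial" "HOL-Library.Z2"
begin

text \<open>F_2-linear independence of a set of field elements (in characteristic 2 an
  F_2-linear combination is just a subset sum).\<close>
definition f2_indep :: "'a::field set \<Rightarrow> bool" where
  "f2_indep S \<longleftrightarrow> finite S \<and> (\<forall>T\<subseteq>S. (\<Sum>x\<in>T. x) = 0 \<longrightarrow> T = {})"

definition f2_rank :: "'a::field set \<Rightarrow> nat" where
  "f2_rank X = Max {card S | S. S \<subseteq> X \<and> f2_indep S}"

definition f2_basis :: "nat \<Rightarrow> (nat \<Rightarrow> 'a::field) \<Rightarrow> bool" where
  "f2_basis t \<beta> \<longleftrightarrow>
     (\<forall>S\<subseteq>{1..t}. (\<Sum>i\<in>S. \<beta> i) = 0 \<longrightarrow> S = {}) \<and>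
     (\<forall>x::'a. \<exists>S\<subseteq>{1..t}. x = (\<Sum>i\<in>S. \<beta> i))"

text \<open>Reed-Solomon code RS(A,k): evaluation vectors of polynomials of degree < k
  (the zero polynomial included; for k = 0 this is the zero code). Only the values
  on A are ever read.\<close>
definition rs_code :: "'a::field set \<Rightarrow> nat \<Rightarrow> ('a \<Rightarrow> 'a) set" where
  "rs_code A k = {(\<lambda>\<alpha>. poly f \<alpha>) | f. \<forall>i\<ge>k. coeff f i = 0}"

text \<open>A linear repair scheme over F_2 for node a0 of the code C with evaluation set A:
  node alpha (alpha in A, alpha \<noteq> a0) sends b alpha bits q alpha j (c alpha), j < b alpha,
  each an F_2-linear function of its symbol; the lost symbol c a0 is recovered by an
  F_2-linear map R from the downloaded bits (unused coordinates are set to 0).\<close>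
definition download ::
  "'a set \<Rightarrow> 'a \<Rightarrow> ('a \<Rightarrow> nat) \<Rightarrow> ('a \<Rightarrow> nat \<Rightarrow> 'a \<Rightarrow> bit) \<Rightarrow> ('a \<Rightarrow> 'a) \<Rightarrow> ('a \<Rightarrow> nat \<Rightarrow> bit)" where
  "download A a0 b q c = (\<lambda>\<alpha> j. if \<alpha> \<in> A - {a0} \<and> j < b \<alpha> then q \<alpha> j (c \<alpha>) else 0)"

definition linear_repair_scheme ::
  "'a::field set \<Rightarrow> ('a \<Rightarrow> 'a) set \<Rightarrow> 'a \<Rightarrow> ('a \<Rightarrow> nat) \<Rightarrow> ('a \<Rightarrow> nat \<Rightarrow> 'a \<Rightarrow> bit)
     \<Rightarrow> (('a \<Rightarrow> nat \<Rightarrow> bit) \<Rightarrow> 'a) \<Rightarrow> bool" where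
  "linear_repair_scheme A C a0 b q R \<longleftrightarrow>
     (\<forall>\<alpha> j x y. q \<alpha> j (x + y) = q \<alpha> j x + q \<alpha> j y) \<and>
     (\<forall>d e. R (\<lambda>\<alpha> j. d \<alpha> j + e \<alpha> j) = R d + R e) \<and>
     (\<forall>c\<in>C. R (download A a0 b q c) = c a0)"

definition bandwidth :: "'a set \<Rightarrow> 'a \<Rightarrow> ('a \<Rightarrow> nat) \<Rightarrow> nat" where
  "bandwidth A a0 b = (\<Sum>\<alpha>\<in>A - {a0}. b \<alpha>)"

end

theory Submission
  imports Defs "HOL-Library.FuncSet" "HOL-Library.Function_Algebras"
begin

text \<open>
  Write \<open>\<beta>\<^sub>i = a\<^sub>0 - z\<^sub>i\<close>, so that \<open>g\<^sub>i(x) = \<beta>\<^sub>i\<^sup>2 + (x - a\<^sub>0) \<beta>\<^sub>i\<close>. At the failed node the check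
  values are the squares \<open>\<beta>\<^sub>i\<^sup>2\<close>, again an \<open>F\<^sub>2\<close>-basis because squaring is additive and
  injective in characteristic two. At any other node \<open>\<alpha>\<close> they lie in the image of the additive
  map \<open>x \<mapsto> x\<^sup>2 + (\<alpha> - a\<^sub>0) x\<close>, whose kernel is \<open>{0, \<alpha> - a\<^sub>0}\<close>; so \<open>t - 1\<close> of them span all
  \<open>t\<close>, and node \<open>\<alpha>\<close> sends \<open>t - 1\<close> bits. Instead of the field trace any nonzero \<open>F\<^sub>2\<close>-linear
  functional \<open>T\<close> works: applying \<open>T\<close> to the dual relations \<open>\<Sum>\<^sub>\<alpha> \<lambda>\<^sub>\<alpha> g\<^sub>i(\<alpha>) f(\<alpha>) = 0\<close> expresses
  the \<open>t\<close> values \<open>T(\<lambda>\<^sub>a\<^sub>0 \<beta>\<^sub>i\<^sup>2 f(a\<^sub>0))\<close> through downloaded bits, and these determine \<open>f(a\<^sub>0)\<close>.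

  For optimality, let \<open>n = |F|\<close>, \<open>r = 2\<close>, and let \<open>V\<^sub>\<alpha>\<close> be the symbols on which node \<open>\<alpha>\<close> sends
  only zeros, an \<open>F\<^sub>2\<close>-subspace with \<open>|V\<^sub>\<alpha>| \<ge> 2\<^bsup>t - b\<^sub>\<alpha>\<^esup>\<close>. The dual code is spanned by
  \<open>(\<lambda>\<^sub>\<alpha>)\<close> and \<open>(\<alpha> \<lambda>\<^sub>\<alpha>)\<close>, so a word supported on three nodes \<open>a\<^sub>1, \<alpha>, \<beta>\<close> is a codeword as
  soon as two linear conditions hold. If \<open>v \<in> V\<^sub>\<alpha>\<close> and \<open>w \<in> V\<^sub>\<beta>\<close> satisfy
  \<open>(\<alpha> - a\<^sub>1) \<lambda>\<^sub>\<alpha> v = (\<beta> - a\<^sub>1) \<lambda>\<^sub>\<beta> w\<close>, such a codeword with entries \<open>v, w\<close> is invisible to the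
  repair of \<open>a\<^sub>1\<close>, forcing \<open>v = 0\<close>. Hence the sets \<open>(\<alpha> - a\<^sub>1) \<lambda>\<^sub>\<alpha> (V\<^sub>\<alpha> - {0})\<close> are disjoint
  in \<open>F - {0}\<close>, so \<open>\<Sum>\<^sub>\<alpha> (|V\<^sub>\<alpha>| - 1) \<le> 2\<^sup>t - 1\<close>; combined with \<open>t \<le> b\<^sub>\<alpha> + |V\<^sub>\<alpha>| - 1\<close>
  this bounds the bandwidth \<open>\<Sum>\<^sub>\<alpha> b\<^sub>\<alpha>\<close> from below by \<open>(n - 1)(t - 1)\<close>.
\<close>

section \<open>Characteristic two and additive maps\<close>

lemma char2_add_self:
  fixes x :: "'a::ring_1"
  assumes "(1::'a) + 1 = 0"
  shows "x + x = 0"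
proof -
  have "x + x = (1 + 1) * x"
    by (simp only: distrib_right mult_1_left)
  also have "\<dots> = 0"
    by (simp only: assms mult_zero_left)
  finally show ?thesis .
qed

lemma char2_minus:
  fixes x :: "'a::ring_1"
  assumes "(1::'a) + 1 = 0"
  shows "- x = x"
  by (rule minus_unique[OF char2_add_self[OF assms]])

lemma char2_diff:
  fixes x y :: "'a::ring_1"
  assumes "(1::'a) + 1 = 0"
  shows "x - y = x + y"
  using char2_minus[OF assms, of y] by (simp only: diff_conv_add_uminus)

lemma char2_add_eq_0_iff:
  fixes x y :: "'a::ring_1"
  assumes "(1::'a) + 1 = 0"
  shows "x + y = 0 \<longleftrightarrow> x = y"
  using eq_neg_iff_add_eq_0[of x y] char2_minus[OF assms, of y] by simp

lemma char2_sum_symdiff: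
  fixes f :: "'b \<Rightarrow> 'a::ring_1"
  assumes char2: "(1::'a) + 1 = 0" and "finite P" "finite Q"
  shows "sum f ((P - Q) \<union> (Q - P)) = sum f P + sum f Q"
proof -
  have "sum f P = sum f (P - Q) + sum f (P \<inter> Q)"
    using assms sum.Int_Diff[of P f Q] by (simp add: add.commute)
  moreover have "sum f Q = sum f (Q - P) + sum f (P \<inter> Q)"
    using assms sum.Int_Diff[of Q f P] by (simp add: add.commute Int_commute)
  moreover have "sum f ((P - Q) \<union> (Q - P)) = sum f (P - Q) + sum f (Q - P)"
    using assms by (intro sum.union_disjoint) auto
  ultimately have "sum f P + sum f Q
      = sum f ((P - Q) \<union> (Q - P)) + (sum f (P \<inter> Q) + sum f (P \<inter> Q))"
    by (simp add: algebra_simps)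
  also have "sum f (P \<inter> Q) + sum f (P \<inter> Q) = 0"
    by (rule char2_add_self[OF char2])
  finally show ?thesis
    by (simp only: add_0_right)
qed

lemma char2_square_add:
  fixes x y :: "'a::comm_ring_1"
  assumes "(1::'a) + 1 = 0"
  shows "(x + y)\<^sup>2 = x\<^sup>2 + y\<^sup>2"
  using char2_add_self[OF assms, of "x * y"] by (simp add: power2_eq_square algebra_simps)

lemma char2_square_sum:
  fixes f :: "'b \<Rightarrow> 'a::comm_ring_1"
  assumes "(1::'a) + 1 = 0" and "finite S"
  shows "(\<Sum>i\<in>S. f i)\<^sup>2 = (\<Sum>i\<in>S. (f i)\<^sup>2)"
  using assms(2) by (induction S rule: finite_induct) (simp_all add: char2_square_add[OF assms(1)])

lemma char2_square_inj:
  fixes x y :: "'a::idom"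
  assumes char2: "(1::'a) + 1 = 0" and eq: "x\<^sup>2 = y\<^sup>2"
  shows "x = y"
proof -
  have "(x + y)\<^sup>2 = y\<^sup>2 + y\<^sup>2"
    by (simp only: char2_square_add[OF char2] eq)
  also have "\<dots> = 0"
    by (rule char2_add_self[OF char2])
  finally show ?thesis
    by (simp add: char2_add_eq_0_iff[OF char2])
qed

lemma char2_square_surj:
  fixes y :: "'a::{idom,finite}"
  assumes char2: "(1::'a) + 1 = 0"
  shows "\<exists>s. y = s\<^sup>2"
proof -
  have "inj (\<lambda>s::'a. s\<^sup>2)"
    using char2_square_inj[OF char2] by (rule injI)
  then have "surj (\<lambda>s::'a. s\<^sup>2)"
    by (rule finite_UNIV_inj_surj[OF finite_UNIV])
  then show ?thesis
    by (rule surjD)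
qed

lemma additive_diff:
  fixes h :: "'a::ab_group_add \<Rightarrow> 'b::ab_group_add"
  assumes "\<And>x y. h (x + y) = h x + h y"
  shows "h (x - y) = h x - h y"
  by (metis assms eq_diff_eq)

lemma additive_sum:
  fixes h :: "'a::ab_group_add \<Rightarrow> 'b::ab_group_add"
  assumes add: "\<And>x y. h (x + y) = h x + h y" and "finite S"
  shows "h (\<Sum>i\<in>S. f i) = (\<Sum>i\<in>S. h (f i))"
proof -
  have "h 0 = 0"
    using additive_diff[OF add, of 0 0] by simp
  with assms(2) show ?thesis
    by (induction S rule: finite_induct) (simp_all add: add)
qed

lemma card_UNIV_eq_card_image_mult_card_kernel:
  fixes h :: "'a::{ab_group_add,finite} \<Rightarrow> 'b::ab_group_add"
  assumes add: "\<And>x y. h (x + y) = h x + h y"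
  shows "card (UNIV :: 'a set) = card (range h) * card {x. h x = 0}"
proof -
  let ?K = "{x. h x = 0}"
  have fiber: "h -` {h x0} = (+) x0 ` ?K" for x0
  proof (intro set_eqI iffI)
    fix x assume "x \<in> h -` {h x0}"
    then have "h x = h x0"
      by simp
    then have "x - x0 \<in> ?K"
      using additive_diff[OF add, of x x0] by simp
    then show "x \<in> (+) x0 ` ?K"
      by (rule rev_image_eqI) simp
  qed (auto simp: add)
  have "(UNIV :: 'a set) = (\<Union>y\<in>range h. h -` {y})"
    by auto
  then have "card (UNIV :: 'a set) = card (\<Union>y\<in>range h. h -` {y})"
    by simp
  also have "\<dots> = (\<Sum>y\<in>range h. card (h -` {y}))"
    by (rule card_UN_disjoint) auto
  also have "\<dots> = (\<Sum>y\<in>range h. card ?K)"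
    by (rule sum.cong) (auto simp: fiber card_image)
  also have "\<dots> = card (range h) * card ?K"
    by simp
  finally show ?thesis .
qed

section \<open>Subset sums over \<open>F\<^sub>2\<close>\<close>

lemma UNIV_bit: "(UNIV :: bit set) = {0, 1}"
  by (auto intro: bit.exhaust)

lemma card_UNIV_bit: "card (UNIV :: bit set) = 2"
  by (simp add: UNIV_bit)

lemma card_funcset_bit: "finite I \<Longrightarrow> card (I \<rightarrow>\<^sub>E (UNIV :: bit set)) = 2 ^ card I"
  by (simp add: card_PiE card_UNIV_bit)

lemma f2_indepD: "f2_indep S \<Longrightarrow> T \<subseteq> S \<Longrightarrow> (\<Sum>x\<in>T. x) = 0 \<Longrightarrow> T = {}"
  by (simp add: f2_indep_def)

lemma card_subspace_ge_pow2_card_indep: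
  fixes S :: "'a::field set"
  assumes char2: "(1::'a) + 1 = 0" and indep: "f2_indep S"
    and G: "finite G" "S \<subseteq> G" "0 \<in> G" "\<And>x y. x \<in> G \<Longrightarrow> y \<in> G \<Longrightarrow> x + y \<in> G"
  shows "2 ^ card S \<le> card G"
proof -
  have fin: "finite S"
    using indep by (simp add: f2_indep_def)
  have inj: "inj_on Sum (Pow S)"
  proof (rule inj_onI)
    fix P Q assume P: "P \<in> Pow S" and Q: "Q \<in> Pow S" and eq: "\<Sum>P = \<Sum>Q"
    have "finite P" "finite Q"
      using P Q fin by (auto intro: finite_subset)
    then have "\<Sum>((P - Q) \<union> (Q - P)) = \<Sum>P + \<Sum>Q"
      by (rule char2_sum_symdiff[OF char2])
    then have "\<Sum>((P - Q) \<union> (Q - P)) = 0"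
      using eq char2_add_self[OF char2] by simp
    moreover have "(P - Q) \<union> (Q - P) \<subseteq> S"
      using P Q by auto
    ultimately have "(P - Q) \<union> (Q - P) = {}"
      by (rule f2_indepD[OF indep, rotated])
    then show "P = Q" by auto
  qed
  have "Sum ` Pow S \<subseteq> G"
  proof
    fix y assume "y \<in> Sum ` Pow S"
    then obtain P where P: "P \<subseteq> S" "y = \<Sum>P"
      by auto
    have "finite P"
      using P(1) fin by (rule finite_subset)
    then show "y \<in> G"
      using P G(2-4) by (induction P arbitrary: y rule: finite_induct) auto
  qed
  then have "card (Sum ` Pow S) \<le> card G"
    by (rule card_mono[OF G(1)])
  then show ?thesis
    using card_image[OF inj] fin by (simp add: card_Pow)
qed

lemma f2_rank_ge:
  fixes X :: "'a::field set"
  assumes "finite X" "S \<subseteq> X" "f2_indep S"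
  shows "card S \<le> f2_rank X"
proof -
  have "finite {card S | S. S \<subseteq> X \<and> f2_indep S}"
    by (rule finite_subset[of _ "card ` Pow X"]) (use assms(1) in auto)
  then show ?thesis
    unfolding f2_rank_def using assms by (intro Max_ge) auto
qed

lemma f2_rank_le_of_subspace:
  fixes X :: "'a::field set"
  assumes char2: "(1::'a) + 1 = 0"
    and G: "finite G" "X \<subseteq> G" "0 \<in> G" "\<And>x y. x \<in> G \<Longrightarrow> y \<in> G \<Longrightarrow> x + y \<in> G"
    and card: "card G \<le> 2 ^ m"
  shows "f2_rank X \<le> m"
proof -
  have fin: "finite {card S | S. S \<subseteq> X \<and> f2_indep S}"
    by (rule finite_subset[of _ "card ` Pow X"]) (use G(1,2) finite_subset in auto)
  have ne: "{card S | S. S \<subseteq> X \<and> f2_indep S} \<noteq> {}"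
    by (auto simp: f2_indep_def intro!: exI[of _ "{}"])
  have "card S \<le> m" if "S \<subseteq> X" "f2_indep S" for S
  proof -
    have "2 ^ card S \<le> card G"
      using that G by (intro card_subspace_ge_pow2_card_indep[OF char2]) auto
    then have "(2::nat) ^ card S \<le> 2 ^ m"
      using card by linarith
    then show ?thesis
      by simp
  qed
  then show ?thesis
    unfolding f2_rank_def using fin ne by (subst Max_le_iff) auto
qed

lemma f2_basis_sum_eq_0:
  "f2_basis t \<beta> \<Longrightarrow> S \<subseteq> {1..t} \<Longrightarrow> (\<Sum>i\<in>S. \<beta> i) = 0 \<Longrightarrow> S = {}"
  by (simp add: f2_basis_def)

lemma f2_basis_sum_inj:
  fixes \<beta> :: "nat \<Rightarrow> 'a::field"
  assumes char2: "(1::'a) + 1 = 0" and basis: "f2_basis t \<beta>"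
    and S: "S \<subseteq> {1..t}" "S' \<subseteq> {1..t}" and eq: "(\<Sum>i\<in>S. \<beta> i) = (\<Sum>i\<in>S'. \<beta> i)"
  shows "S = S'"
proof -
  have "finite S" "finite S'"
    using S by (auto intro: finite_subset)
  then have "(\<Sum>i\<in>(S - S') \<union> (S' - S). \<beta> i) = (\<Sum>i\<in>S. \<beta> i) + (\<Sum>i\<in>S'. \<beta> i)"
    by (rule char2_sum_symdiff[OF char2])
  then have "(\<Sum>i\<in>(S - S') \<union> (S' - S). \<beta> i) = 0"
    using eq char2_add_self[OF char2] by simp
  moreover have "(S - S') \<union> (S' - S) \<subseteq> {1..t}"
    using S by auto
  ultimately have "(S - S') \<union> (S' - S) = {}"
    by (rule f2_basis_sum_eq_0[OF basis, rotated])
  then show ?thesis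
    by auto
qed

lemma f2_basis_inj:
  fixes \<beta> :: "nat \<Rightarrow> 'a::field"
  assumes char2: "(1::'a) + 1 = 0" and basis: "f2_basis t \<beta>"
  shows "inj_on \<beta> {1..t}"
proof (rule inj_onI)
  fix i j assume "i \<in> {1..t}" "j \<in> {1..t}" "\<beta> i = \<beta> j"
  then have "{i} = {j}"
    by (intro f2_basis_sum_inj[OF char2 basis]) auto
  then show "i = j"
    by simp
qed

lemma f2_basis_spans:
  "f2_basis t \<beta> \<Longrightarrow> \<exists>S\<subseteq>{1..t}. x = (\<Sum>i\<in>S. \<beta> i)"
  by (simp add: f2_basis_def)

lemma f2_indep_basis_image:
  fixes \<beta> :: "nat \<Rightarrow> 'a::field" and \<phi> :: "'a \<Rightarrow> 'a"
  assumes char2: "(1::'a) + 1 = 0" and basis: "f2_basis t \<beta>"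
    and add: "\<And>x y. \<phi> (x + y) = \<phi> x + \<phi> y" and kernel: "\<And>x. \<phi> x = 0 \<Longrightarrow> x = 0"
  shows "inj_on (\<phi> \<circ> \<beta>) {1..t}" and "f2_indep ((\<phi> \<circ> \<beta>) ` {1..t})"
proof -
  show inj: "inj_on (\<phi> \<circ> \<beta>) {1..t}"
  proof (rule comp_inj_on[OF f2_basis_inj[OF char2 basis]], rule inj_onI)
    fix x y assume "\<phi> x = \<phi> y"
    then show "x = y"
      using kernel[of "x - y"] additive_diff[OF add, of x y] by simp
  qed
  show "f2_indep ((\<phi> \<circ> \<beta>) ` {1..t})"
    unfolding f2_indep_def
  proof (intro conjI allI impI)
    fix T assume T: "T \<subseteq> (\<phi> \<circ> \<beta>) ` {1..t}" "(\<Sum>x\<in>T. x) = 0"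
    define S where "S = {i\<in>{1..t}. \<phi> (\<beta> i) \<in> T}"
    have TS: "T = (\<phi> \<circ> \<beta>) ` S"
      using T(1) by (auto simp: S_def)
    have "inj_on (\<phi> \<circ> \<beta>) S"
      by (rule inj_on_subset[OF inj]) (auto simp: S_def)
    then have "(\<Sum>x\<in>T. x) = (\<Sum>i\<in>S. \<phi> (\<beta> i))"
      unfolding TS by (simp add: sum.reindex comp_def)
    also have "\<dots> = \<phi> (\<Sum>i\<in>S. \<beta> i)"
      by (simp add: additive_sum[OF add] S_def)
    finally have "\<phi> (\<Sum>i\<in>S. \<beta> i) = (\<Sum>x\<in>T. x)" ..
    then have "(\<Sum>i\<in>S. \<beta> i) = 0"
      using T(2) kernel by simp
    then have "S = {}"
      by (rule f2_basis_sum_eq_0[OF basis, rotated]) (auto simp: S_def)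
    then show "T = {}"
      using TS by simp
  qed simp
qed

definition f2_coords :: "nat \<Rightarrow> (nat \<Rightarrow> 'a::field) \<Rightarrow> 'a \<Rightarrow> nat set" where
  "f2_coords t \<beta> x = (THE S. S \<subseteq> {1..t} \<and> x = (\<Sum>i\<in>S. \<beta> i))"

lemma f2_coords_eq:
  fixes \<beta> :: "nat \<Rightarrow> 'a::field"
  assumes char2: "(1::'a) + 1 = 0" and basis: "f2_basis t \<beta>"
    and "S \<subseteq> {1..t}" "x = (\<Sum>i\<in>S. \<beta> i)"
  shows "f2_coords t \<beta> x = S"
  unfolding f2_coords_def
  using assms(3,4) f2_basis_sum_inj[OF char2 basis] by (intro the_equality) auto

lemma f2_coords_spec:
  fixes \<beta> :: "nat \<Rightarrow> 'a::field"
  assumes char2: "(1::'a) + 1 = 0" and basis: "f2_basis t \<beta>"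
  shows "f2_coords t \<beta> x \<subseteq> {1..t}" "x = (\<Sum>i\<in>f2_coords t \<beta> x. \<beta> i)"
proof -
  obtain S where "S \<subseteq> {1..t}" "x = (\<Sum>i\<in>S. \<beta> i)"
    using f2_basis_spans[OF basis] by blast
  moreover from this have "f2_coords t \<beta> x = S"
    by (rule f2_coords_eq[OF char2 basis])
  ultimately show "f2_coords t \<beta> x \<subseteq> {1..t}" "x = (\<Sum>i\<in>f2_coords t \<beta> x. \<beta> i)"
    by simp_all
qed

definition f2_coord :: "nat \<Rightarrow> (nat \<Rightarrow> 'a::field) \<Rightarrow> nat \<Rightarrow> 'a \<Rightarrow> bit" where
  "f2_coord t \<beta> i x = (if i \<in> f2_coords t \<beta> x then 1 else 0)"

lemma f2_coord_add:
  fixes \<beta> :: "nat \<Rightarrow> 'a::field"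
  assumes char2: "(1::'a) + 1 = 0" and basis: "f2_basis t \<beta>"
  shows "f2_coord t \<beta> i (x + y) = f2_coord t \<beta> i x + f2_coord t \<beta> i y"
proof -
  let ?X = "f2_coords t \<beta> x" and ?Y = "f2_coords t \<beta> y"
  note X = f2_coords_spec[OF char2 basis, of x] and Y = f2_coords_spec[OF char2 basis, of y]
  have "finite ?X" "finite ?Y"
    using X(1) Y(1) by (auto intro: finite_subset)
  then have "x + y = (\<Sum>i\<in>(?X - ?Y) \<union> (?Y - ?X). \<beta> i)"
    using char2_sum_symdiff[OF char2] X(2) Y(2) by metis
  then have "f2_coords t \<beta> (x + y) = (?X - ?Y) \<union> (?Y - ?X)"
    using X(1) Y(1) by (intro f2_coords_eq[OF char2 basis]) auto
  then show ?thesis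
    unfolding f2_coord_def by (cases "i \<in> ?X"; cases "i \<in> ?Y") simp_all
qed

lemma f2_coord_basis:
  fixes \<beta> :: "nat \<Rightarrow> 'a::field"
  assumes char2: "(1::'a) + 1 = 0" and basis: "f2_basis t \<beta>" and "i \<in> {1..t}"
  shows "f2_coord t \<beta> i (\<beta> i) = 1"
proof -
  have "f2_coords t \<beta> (\<beta> i) = {i}"
    using assms(3) by (intro f2_coords_eq[OF char2 basis]) auto
  then show ?thesis
    by (simp add: f2_coord_def)
qed

section \<open>Lagrange interpolation and the dual Reed-Solomon code\<close>

lemma prod_linear_factors_coeffs:
  fixes B :: "'a::field set"
  assumes "finite B"
  shows "degree (\<Prod>b\<in>B. [:-b, 1:]) = card B"
    and "coeff (\<Prod>b\<in>B. [:-b, 1:]) (card B) = 1"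
    and "card B \<ge> 1 \<Longrightarrow> coeff (\<Prod>b\<in>B. [:-b, 1:]) (card B - 1) = - (\<Sum>b\<in>B. b)"
proof -
  have "degree (\<Prod>b\<in>B. [:-b, 1:]) = card B \<and> coeff (\<Prod>b\<in>B. [:-b, 1:]) (card B) = 1
    \<and> (card B \<ge> 1 \<longrightarrow> coeff (\<Prod>b\<in>B. [:-b, 1:]) (card B - 1) = - (\<Sum>b\<in>B. b))"
    using assms
  proof (induction B rule: finite_induct)
    case empty
    then show ?case
      by simp
  next
    case (insert b B)
    define P where "P = (\<Prod>b\<in>B. [:-b, 1:])"
    have P: "degree P = card B" "coeff P (card B) = 1"
      "card B \<ge> 1 \<Longrightarrow> coeff P (card B - 1) = - (\<Sum>b\<in>B. b)"
      using insert.IH by (auto simp: P_def)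
    have prod: "(\<Prod>b\<in>insert b B. [:-b, 1:]) = smult (-b) P + pCons 0 P"
      using insert.hyps by (simp add: P_def mult_pCons_left)
    have "P \<noteq> 0"
      using P(2) by auto
    then have "degree (pCons 0 P) = Suc (card B)"
      using P(1) by simp
    moreover have "degree (smult (-b) P) < Suc (card B)"
      using P(1) degree_smult_le[of "-b" P] by linarith
    ultimately have "degree (smult (-b) P + pCons 0 P) = Suc (card B)"
      by (metis degree_add_eq_right)
    moreover have "coeff (smult (-b) P + pCons 0 P) (Suc (card B)) = 1"
      using P by (simp add: coeff_eq_0)
    moreover have "coeff (smult (-b) P + pCons 0 P) (card B) = - (\<Sum>b\<in>insert b B. b)"
      using P insert.hyps by (cases "card B") simp_all
    ultimately show ?case
      using prod insert.hyps by simp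
  qed
  then show "degree (\<Prod>b\<in>B. [:-b, 1:]) = card B"
    and "coeff (\<Prod>b\<in>B. [:-b, 1:]) (card B) = 1"
    and "card B \<ge> 1 \<Longrightarrow> coeff (\<Prod>b\<in>B. [:-b, 1:]) (card B - 1) = - (\<Sum>b\<in>B. b)"
    by blast+
qed

definition lagrange_basis :: "'a::field set \<Rightarrow> 'a \<Rightarrow> 'a poly" where
  "lagrange_basis A a = (\<Prod>b\<in>A - {a}. [:-b, 1:])"

text \<open>The multipliers \<open>\<lambda>\<^sub>\<alpha>\<close> of the dual code are \<open>1 / lagrange_denom A \<alpha>\<close>.\<close>

definition lagrange_denom :: "'a::field set \<Rightarrow> 'a \<Rightarrow> 'a" where
  "lagrange_denom A a = (\<Prod>b\<in>A - {a}. a - b)"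

lemma lagrange_denom_nonzero: "finite A \<Longrightarrow> lagrange_denom A a \<noteq> 0"
  by (simp add: lagrange_denom_def)

lemma poly_lagrange_basis:
  assumes "finite A" "x \<in> A"
  shows "poly (lagrange_basis A a) x = (if x = a then lagrange_denom A a else 0)"
  using assms by (simp add: lagrange_basis_def lagrange_denom_def poly_prod prod_zero_iff)

lemma lagrange_basis_coeffs:
  assumes "finite A" "a \<in> A"
  shows "degree (lagrange_basis A a) = card A - 1"
    and "coeff (lagrange_basis A a) (card A - 1) = 1"
    and "card A \<ge> 2 \<Longrightarrow> coeff (lagrange_basis A a) (card A - 2) = a - (\<Sum>b\<in>A. b)"
proof -
  have card: "card (A - {a}) = card A - 1"
    using assms by simp
  note coeffs = prod_linear_factors_coeffs[of "A - {a}", folded lagrange_basis_def, OF finite_Diff[OF assms(1)]]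
  show "degree (lagrange_basis A a) = card A - 1" "coeff (lagrange_basis A a) (card A - 1) = 1"
    using coeffs(1,2) card by simp_all
  assume "card A \<ge> 2"
  then have "card (A - {a}) \<ge> 1" "card (A - {a}) - 1 = card A - 2"
    using card by auto
  then show "coeff (lagrange_basis A a) (card A - 2) = a - (\<Sum>b\<in>A. b)"
    using coeffs(3) assms by (simp add: sum_diff1)
qed

definition lagrange_interp :: "'a::field set \<Rightarrow> ('a \<Rightarrow> 'a) \<Rightarrow> 'a poly" where
  "lagrange_interp A c = (\<Sum>a\<in>A. smult (c a / lagrange_denom A a) (lagrange_basis A a))"

lemma poly_lagrange_interp:
  assumes "finite A" "x \<in> A"
  shows "poly (lagrange_interp A c) x = c x"
proof -
  have "poly (lagrange_interp A c) x
      = (\<Sum>a\<in>A. c a / lagrange_denom A a * poly (lagrange_basis A a) x)"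
    by (simp add: lagrange_interp_def poly_sum)
  also have "\<dots> = (\<Sum>a\<in>A. if a = x then c x else 0)"
    using assms by (intro sum.cong) (auto simp: poly_lagrange_basis lagrange_denom_nonzero)
  finally show ?thesis
    using assms by simp
qed

lemma coeff_lagrange_interp:
  "coeff (lagrange_interp A c) j = (\<Sum>a\<in>A. c a / lagrange_denom A a * coeff (lagrange_basis A a) j)"
  by (simp add: lagrange_interp_def coeff_sum)

lemma lagrange_interp_unique:
  fixes h :: "'a::field poly"
  assumes "finite A" "degree h < card A"
  shows "lagrange_interp A (poly h) = h"
proof (rule poly_eqI_degree[of A])
  show "poly (lagrange_interp A (poly h)) x = poly h x" if "x \<in> A" for x
    using assms(1) that by (rule poly_lagrange_interp)
  have "degree (lagrange_interp A (poly h)) \<le> card A - 1"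
    unfolding lagrange_interp_def using assms(1)
    by (intro degree_sum_le) (auto intro: order.trans[OF degree_smult_le] simp: lagrange_basis_coeffs(1))
  then show "degree (lagrange_interp A (poly h)) < card A"
    using assms(2) by linarith
qed fact

lemma lagrange_dual_sum_eq_0:
  fixes h :: "'a::field poly"
  assumes "finite A" "degree h < card A - 1"
  shows "(\<Sum>a\<in>A. poly h a / lagrange_denom A a) = 0"
proof -
  have "(\<Sum>a\<in>A. poly h a / lagrange_denom A a) = coeff (lagrange_interp A (poly h)) (card A - 1)"
    unfolding coeff_lagrange_interp
    by (intro sum.cong refl) (simp only: lagrange_basis_coeffs(2)[OF assms(1)] mult_1_right)
  also have "\<dots> = coeff h (card A - 1)"
    using assms by (simp add: lagrange_interp_unique)
  also have "\<dots> = 0"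
    using assms(2) by (simp add: coeff_eq_0)
  finally show ?thesis .
qed

lemma lagrange_interp_of_dual_checks:
  fixes c :: "'a::field \<Rightarrow> 'a"
  assumes "finite A" "card A \<ge> 2"
    and check0: "(\<Sum>a\<in>A. c a / lagrange_denom A a) = 0"
    and check1: "(\<Sum>a\<in>A. a * (c a / lagrange_denom A a)) = 0"
    and j: "j \<ge> card A - 2"
  shows "coeff (lagrange_interp A c) j = 0"
proof -
  consider "j \<ge> card A" | "j = card A - 1" | "j = card A - 2"
    using j by linarith
  then show ?thesis
  proof cases
    case 1
    have "coeff (lagrange_basis A a) j = 0" if "a \<in> A" for a
    proof (rule coeff_eq_0)
      have "card A > 0"
        using assms(1) that card_gt_0_iff by blast
      then show "degree (lagrange_basis A a) < j"
        using 1 lagrange_basis_coeffs(1)[OF assms(1) that] by linarith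
    qed
    then show ?thesis
      by (simp add: coeff_lagrange_interp)
  next
    case 2
    then show ?thesis
      using check0 unfolding coeff_lagrange_interp
      by (metis (no_types, lifting) assms(1) lagrange_basis_coeffs(2) mult_1_right sum.cong)
  next
    case 3
    let ?w = "\<lambda>a. c a / lagrange_denom A a"
    have "coeff (lagrange_interp A c) j = (\<Sum>a\<in>A. ?w a * (a - (\<Sum>b\<in>A. b)))"
      unfolding coeff_lagrange_interp 3 using assms(1,2)
      by (intro sum.cong refl) (simp only: lagrange_basis_coeffs(3))
    also have "\<dots> = (\<Sum>a\<in>A. a * ?w a - (\<Sum>b\<in>A. b) * ?w a)"
      by (rule sum.cong[OF refl]) (simp only: mult.commute[of "?w _"] left_diff_distrib)
    also have "\<dots> = (\<Sum>a\<in>A. a * ?w a) - (\<Sum>b\<in>A. b) * (\<Sum>a\<in>A. ?w a)"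
      by (simp only: sum_subtractf sum_distrib_left)
    finally show ?thesis
      using check0 check1 by simp
  qed
qed

lemma rs_code_dual:
  fixes h :: "'a::field poly"
  assumes "finite A" "c \<in> rs_code A k" "degree h + k < card A"
  shows "(\<Sum>\<alpha>\<in>A. poly h \<alpha> / lagrange_denom A \<alpha> * c \<alpha>) = 0"
proof -
  obtain f where c: "c = poly f" and f: "\<And>i. i \<ge> k \<Longrightarrow> coeff f i = 0"
    using assms(2) unfolding rs_code_def by blast
  show ?thesis
  proof (cases "f = 0")
    case False
    then have "degree f < k"
      using f by (metis leading_coeff_0_iff not_le)
    then have "degree (f * h) < card A - 1"
      using assms(3) degree_mult_le[of f h] by linarith
    then have "(\<Sum>\<alpha>\<in>A. poly (f * h) \<alpha> / lagrange_denom A \<alpha>) = 0"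
      by (rule lagrange_dual_sum_eq_0[OF assms(1)])
    then show ?thesis
      by (simp add: c mult.commute)
  qed (simp add: c)
qed

lemma rs_code_of_dual_checks:
  fixes c :: "'a::{field,finite} \<Rightarrow> 'a"
  assumes "card (UNIV :: 'a set) \<ge> 2"
    and "(\<Sum>x\<in>UNIV. c x / lagrange_denom UNIV x) = 0"
    and "(\<Sum>x\<in>UNIV. x * (c x / lagrange_denom UNIV x)) = 0"
  shows "c \<in> rs_code UNIV (card (UNIV :: 'a set) - 2)"
proof -
  have "c = poly (lagrange_interp UNIV c)"
    by (simp add: poly_lagrange_interp fun_eq_iff)
  moreover have "coeff (lagrange_interp UNIV c) j = 0" if "j \<ge> card (UNIV :: 'a set) - 2" for j
    using assms that by (intro lagrange_interp_of_dual_checks) simp_all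
  ultimately show ?thesis
    unfolding rs_code_def by blast
qed

section \<open>Trace repair\<close>

lemma trace_coordinates_unique:
  fixes T :: "'a::{field,finite} \<Rightarrow> bit" and c :: "nat \<Rightarrow> 'a"
  assumes add: "\<And>x y. T (x + y) = T x + T y" and nonzero: "T y0 \<noteq> 0"
    and span: "\<And>y. \<exists>S\<subseteq>I. y = (\<Sum>i\<in>S. c i)"
    and I: "finite I" and card: "card (UNIV :: 'a set) = 2 ^ card I"
  shows "\<exists>!x. \<forall>i\<in>I. T (c i * x) = u i"
proof -
  define M where "M x = restrict (\<lambda>i. T (c i * x)) I" for x
  have "inj M"
  proof (rule injI)
    fix x y assume eq: "M x = M y"
    have Tw: "T (c i * (x - y)) = 0" if "i \<in> I" for i
    proof -
      have "T (c i * x) = T (c i * y)"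
        using that fun_cong[OF eq, of i] by (simp add: M_def)
      then show ?thesis
        by (simp add: right_diff_distrib additive_diff[OF add])
    qed
    have "T (Y * (x - y)) = 0" for Y
    proof -
      obtain S where S: "S \<subseteq> I" "Y = (\<Sum>i\<in>S. c i)"
        using span by blast
      then have "T (Y * (x - y)) = (\<Sum>i\<in>S. T (c i * (x - y)))"
        using I by (simp add: sum_distrib_right additive_sum[OF add] finite_subset)
      also have "\<dots> = 0"
        using S(1) Tw by (intro sum.neutral) auto
      finally show ?thesis .
    qed
    from this[of "y0 / (x - y)"] show "x = y"
      using nonzero by (cases "x = y") auto
  qed
  have "range M = I \<rightarrow>\<^sub>E (UNIV :: bit set)"
  proof (rule card_subset_eq)
    show "finite (I \<rightarrow>\<^sub>E (UNIV :: bit set))"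
      using I by (simp add: finite_PiE UNIV_bit)
    show "range M \<subseteq> I \<rightarrow>\<^sub>E (UNIV :: bit set)"
      by (auto simp: M_def)
    show "card (range M) = card (I \<rightarrow>\<^sub>E (UNIV :: bit set))"
      using \<open>inj M\<close> card I by (simp add: card_image card_funcset_bit)
  qed
  moreover have "restrict u I \<in> I \<rightarrow>\<^sub>E (UNIV :: bit set)"
    by simp
  ultimately obtain x where x: "M x = restrict u I"
    by (metis rangeE)
  have M_eq: "M x' = restrict u I \<longleftrightarrow> (\<forall>i\<in>I. T (c i * x') = u i)" for x'
    unfolding M_def by (auto simp: restrict_def fun_eq_iff)
  show ?thesis
  proof (rule ex1I)
    show "\<forall>i\<in>I. T (c i * x) = u i"
      using x M_eq by blast
    show "x' = x" if "\<forall>i\<in>I. T (c i * x') = u i" for x'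
      using \<open>inj M\<close> x that M_eq by (metis injD)
  qed
qed

lemma trace_repair_scheme:
  fixes A :: "'a::field set" and T :: "'a \<Rightarrow> bit" and chk :: "nat \<Rightarrow> 'a \<Rightarrow> 'a"
  assumes char2: "(1::'a) + 1 = 0" and A: "finite A" "a0 \<in> A"
    and add: "\<And>x y. T (x + y) = T x + T y"
    and decode: "\<And>u. \<exists>!x. \<forall>i\<in>I. T (chk i a0 * x) = u i"
    and dual: "\<And>c i. c \<in> C \<Longrightarrow> i \<in> I \<Longrightarrow> (\<Sum>\<alpha>\<in>A. chk i \<alpha> * c \<alpha>) = 0"
    and span: "\<And>\<alpha>. \<alpha> \<in> A - {a0} \<Longrightarrow>
      \<exists>v. \<forall>i\<in>I. \<exists>J\<subseteq>{..<b \<alpha>}. chk i \<alpha> = (\<Sum>j\<in>J. v j)"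
  shows "\<exists>q R. linear_repair_scheme A C a0 b q R"
proof -
  have "\<forall>\<alpha>\<in>A - {a0}. \<exists>v. \<forall>i\<in>I. \<exists>J\<subseteq>{..<b \<alpha>}. chk i \<alpha> = (\<Sum>j\<in>J. v j)"
    using span by blast
  then obtain w where w: "\<forall>\<alpha>\<in>A - {a0}. \<forall>i\<in>I. \<exists>J\<subseteq>{..<b \<alpha>}. chk i \<alpha> = (\<Sum>j\<in>J. w \<alpha> j)"
    by (elim bchoice[THEN exE])
  define J where "J \<alpha> i = (SOME J. J \<subseteq> {..<b \<alpha>} \<and> chk i \<alpha> = (\<Sum>j\<in>J. w \<alpha> j))" for \<alpha> i
  have J: "J \<alpha> i \<subseteq> {..<b \<alpha>} \<and> chk i \<alpha> = (\<Sum>j\<in>J \<alpha> i. w \<alpha> j)" if "\<alpha> \<in> A - {a0}" "i \<in> I" for \<alpha> i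
    unfolding J_def by (rule someI_ex) (use w that in blast)
  let ?q = "\<lambda>\<alpha> j x. T (w \<alpha> j * x)"
  define B where "B d i = (\<Sum>\<alpha>\<in>A - {a0}. \<Sum>j\<in>J \<alpha> i. d \<alpha> j)"
    for d :: "'a \<Rightarrow> nat \<Rightarrow> bit" and i
  define R where "R d = (THE x. \<forall>i\<in>I. T (chk i a0 * x) = B d i)" for d
  have R_eq: "R d = x" if "\<forall>i\<in>I. T (chk i a0 * x) = B d i" for d x
    unfolding R_def using decode that by (rule the1_equality)
  have R_spec: "\<forall>i\<in>I. T (chk i a0 * R d) = B d i" for d
    unfolding R_def using decode by (rule theI')
  have "R (\<lambda>\<alpha> j. d \<alpha> j + e \<alpha> j) = R d + R e" for d e
  proof (rule R_eq, intro ballI)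
    fix i assume "i \<in> I"
    then have "T (chk i a0 * (R d + R e)) = B d i + B e i"
      using R_spec[of d] R_spec[of e] by (simp only: distrib_left add)
    also have "\<dots> = B (\<lambda>\<alpha> j. d \<alpha> j + e \<alpha> j) i"
      by (simp only: B_def sum.distrib)
    finally show "T (chk i a0 * (R d + R e)) = B (\<lambda>\<alpha> j. d \<alpha> j + e \<alpha> j) i" .
  qed
  moreover have "R (download A a0 b ?q c) = c a0" if "c \<in> C" for c
  proof (rule R_eq, intro ballI)
    fix i assume i: "i \<in> I"
    have "B (download A a0 b ?q c) i = (\<Sum>\<alpha>\<in>A - {a0}. T (chk i \<alpha> * c \<alpha>))"
    proof (unfold B_def, rule sum.cong[OF refl])
      fix \<alpha> assume \<alpha>: "\<alpha> \<in> A - {a0}"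
      have "(\<Sum>j\<in>J \<alpha> i. download A a0 b ?q c \<alpha> j) = (\<Sum>j\<in>J \<alpha> i. T (w \<alpha> j * c \<alpha>))"
        using J[OF \<alpha> i] \<alpha> by (intro sum.cong) (auto simp: download_def)
      also have "\<dots> = T (chk i \<alpha> * c \<alpha>)"
      proof -
        have "finite (J \<alpha> i)"
          using J[OF \<alpha> i] finite_subset by blast
        then show ?thesis
          using J[OF \<alpha> i] by (simp add: sum_distrib_right additive_sum[OF add])
      qed
      finally show "(\<Sum>j\<in>J \<alpha> i. download A a0 b ?q c \<alpha> j) = T (chk i \<alpha> * c \<alpha>)" .
    qed
    also have "\<dots> = T (\<Sum>\<alpha>\<in>A - {a0}. chk i \<alpha> * c \<alpha>)"
      using A(1) by (simp add: additive_sum[OF add])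
    also have "(\<Sum>\<alpha>\<in>A - {a0}. chk i \<alpha> * c \<alpha>) = chk i a0 * c a0"
      using dual[OF that i] A char2_add_eq_0_iff[OF char2] by (simp add: sum.remove add.commute)
    finally show "T (chk i a0 * c a0) = B (download A a0 b ?q c) i"
      by simp
  qed
  moreover have "?q \<alpha> j (x + y) = ?q \<alpha> j x + ?q \<alpha> j y" for \<alpha> j x y
    by (simp only: distrib_left add)
  ultimately have "linear_repair_scheme A C a0 b ?q R"
    unfolding linear_repair_scheme_def by blast
  then show ?thesis
    by blast
qed

section \<open>The checks \<open>g\<^sub>i(x) = \<beta>\<^sub>i (x - z\<^sub>i)\<close>\<close>

lemma f2_rank_basis_squares:
  fixes \<beta> :: "nat \<Rightarrow> 'a::{field,finite}"
  assumes char2: "(1::'a) + 1 = 0" and basis: "f2_basis t \<beta>"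
    and card: "card (UNIV :: 'a set) = 2 ^ t"
  shows "f2_rank ((\<lambda>i. (\<beta> i)\<^sup>2) ` {1..t}) = t"
proof (rule antisym)
  show "f2_rank ((\<lambda>i. (\<beta> i)\<^sup>2) ` {1..t}) \<le> t"
    using card by (intro f2_rank_le_of_subspace[OF char2, of UNIV]) auto
  have "inj_on (\<lambda>i. (\<beta> i)\<^sup>2) {1..t}" "f2_indep ((\<lambda>i. (\<beta> i)\<^sup>2) ` {1..t})"
    using f2_indep_basis_image[OF char2 basis, of "\<lambda>x. x\<^sup>2"]
    by (simp_all add: char2_square_add[OF char2] comp_def)
  then have "card ((\<lambda>i. (\<beta> i)\<^sup>2) ` {1..t}) \<le> f2_rank ((\<lambda>i. (\<beta> i)\<^sup>2) ` {1..t})"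
    by (intro f2_rank_ge) simp_all
  then show "t \<le> f2_rank ((\<lambda>i. (\<beta> i)\<^sup>2) ` {1..t})"
    using \<open>inj_on _ _\<close> by (simp add: card_image)
qed

lemma f2_rank_square_plus_linear_le:
  fixes \<beta> :: "nat \<Rightarrow> 'a::{field,finite}"
  assumes char2: "(1::'a) + 1 = 0" and card: "card (UNIV :: 'a set) = 2 ^ t" and "t \<ge> 1"
    and "\<delta> \<noteq> 0"
  shows "f2_rank ((\<lambda>i. (\<beta> i)\<^sup>2 + \<delta> * \<beta> i) ` {1..t}) \<le> t - 1"
proof -
  define L where "L x = x\<^sup>2 + \<delta> * x" for x :: 'a
  have add: "L (x + y) = L x + L y" for x y
    by (simp add: L_def char2_square_add[OF char2] algebra_simps)
  have "L x = 0 \<longleftrightarrow> x \<in> {0, \<delta>}" for x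
  proof -
    have "L x = x * (x + \<delta>)"
      by (simp add: L_def power2_eq_square algebra_simps)
    then show ?thesis
      by (simp add: char2_add_eq_0_iff[OF char2])
  qed
  then have "{x. L x = 0} = {0, \<delta>}"
    by blast
  then have "card (range L) * 2 = 2 ^ t"
    using card_UNIV_eq_card_image_mult_card_kernel[OF add] card \<open>\<delta> \<noteq> 0\<close> by simp
  then have "card (range L) \<le> 2 ^ (t - 1)"
    using \<open>t \<ge> 1\<close> by (cases t) auto
  moreover have "x + y \<in> range L" if xy: "x \<in> range L" "y \<in> range L" for x y
  proof -
    obtain a b where "x = L a" "y = L b"
      using xy by blast
    then have "x + y = L (a + b)"
      by (simp add: add)
    then show ?thesis
      by simp
  qed
  moreover have "L 0 = 0"
    by (simp add: L_def)
  then have "0 \<in> range L"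
    by (metis rangeI)
  moreover have "(\<lambda>i. (\<beta> i)\<^sup>2 + \<delta> * \<beta> i) ` {1..t} \<subseteq> range L"
    by (auto simp: L_def)
  ultimately show ?thesis
    by (intro f2_rank_le_of_subspace[OF char2, of "range L"]) simp_all
qed

lemma f2_basis_squares_span:
  fixes \<beta> :: "nat \<Rightarrow> 'a::{field,finite}"
  assumes char2: "(1::'a) + 1 = 0" and basis: "f2_basis t \<beta>" and "\<kappa> \<noteq> 0"
  shows "\<exists>S\<subseteq>{1..t}. y = (\<Sum>i\<in>S. \<kappa> * (\<beta> i)\<^sup>2)"
proof -
  obtain s where s: "y / \<kappa> = s\<^sup>2"
    using char2_square_surj[OF char2] by blast
  obtain S where S: "S \<subseteq> {1..t}" "s = (\<Sum>i\<in>S. \<beta> i)"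
    using f2_basis_spans[OF basis] by blast
  then have "s\<^sup>2 = (\<Sum>i\<in>S. (\<beta> i)\<^sup>2)"
    using char2_square_sum[OF char2] finite_subset by blast
  then have "y = (\<Sum>i\<in>S. \<kappa> * (\<beta> i)\<^sup>2)"
    using s \<open>\<kappa> \<noteq> 0\<close> by (simp add: sum_distrib_left[symmetric] field_simps)
  with S(1) show ?thesis
    by blast
qed

lemma square_plus_linear_span:
  fixes \<beta> :: "nat \<Rightarrow> 'a::field"
  assumes char2: "(1::'a) + 1 = 0" and basis: "f2_basis t \<beta>" and "\<delta> \<noteq> 0"
  shows "\<exists>m\<in>{1..t}. \<forall>i\<in>{1..t}. \<exists>S\<subseteq>{1..t} - {m}.
    (\<beta> i)\<^sup>2 + \<delta> * \<beta> i = (\<Sum>j\<in>S. (\<beta> j)\<^sup>2 + \<delta> * \<beta> j)"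
proof -
  define L where "L x = x\<^sup>2 + \<delta> * x" for x
  have add: "L (x + y) = L x + L y" for x y
    by (simp add: L_def char2_square_add[OF char2] algebra_simps)
  obtain D where D: "D \<subseteq> {1..t}" "\<delta> = (\<Sum>i\<in>D. \<beta> i)"
    using f2_basis_spans[OF basis] by blast
  then obtain m where m: "m \<in> D"
    using \<open>\<delta> \<noteq> 0\<close> by fastforce
  have fin: "finite D"
    using D(1) finite_subset by blast
  have "(\<Sum>j\<in>D. L (\<beta> j)) = L \<delta>"
    using D(2) additive_sum[OF add fin] by simp
  also have "L \<delta> = 0"
    by (simp add: L_def power2_eq_square char2_add_self[OF char2])
  finally have "L (\<beta> m) + (\<Sum>j\<in>D - {m}. L (\<beta> j)) = 0"
    using m fin by (simp add: sum.remove)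
  then have Lm: "L (\<beta> m) = (\<Sum>j\<in>D - {m}. L (\<beta> j))"
    by (simp add: char2_add_eq_0_iff[OF char2])
  have "\<exists>S\<subseteq>{1..t} - {m}. L (\<beta> i) = (\<Sum>j\<in>S. L (\<beta> j))" if "i \<in> {1..t}" for i
  proof (cases "i = m")
    case True
    then show ?thesis
      using Lm D(1) by blast
  next
    case False
    then show ?thesis
      using that by (intro exI[of _ "{i}"]) simp
  qed
  then show ?thesis
    using m D(1) unfolding L_def by blast
qed

lemma bij_betw_sum_subset:
  assumes "bij_betw h A B" "S \<subseteq> B"
  shows "\<exists>J\<subseteq>A. sum (f \<circ> h) J = sum f S"
proof (intro exI conjI)
  let ?J = "inv_into A h ` S"
  show "?J \<subseteq> A"
    using assms by (auto simp: bij_betw_def intro: inv_into_into)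
  have "h ` ?J = S"
    using assms by (intro image_inv_into_cancel) (auto simp: bij_betw_def)
  moreover have "inj_on h ?J"
    using assms \<open>?J \<subseteq> A\<close> by (auto simp: bij_betw_def intro: inj_on_subset)
  ultimately show "sum (f \<circ> h) ?J = sum f S"
    by (metis sum.reindex)
qed

definition skip_index :: "nat \<Rightarrow> nat \<Rightarrow> nat" where
  "skip_index m j = (if j + 1 < m then j + 1 else j + 2)"

lemma bij_betw_skip_index:
  assumes "m \<in> {1..t}"
  shows "bij_betw (skip_index m) {..<t - 1} ({1..t} - {m})"
proof (rule bij_betw_imageI)
  show "inj_on (skip_index m) {..<t - 1}"
    by (auto simp: inj_on_def skip_index_def split: if_splits)
  show "skip_index m ` {..<t - 1} = {1..t} - {m}"
  proof (intro equalityI subsetI)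
    fix i assume "i \<in> {1..t} - {m}"
    then have "i = skip_index m (if i < m then i - 1 else i - 2)" "(if i < m then i - 1 else i - 2) < t - 1"
      using assms by (auto simp: skip_index_def)
    then show "i \<in> skip_index m ` {..<t - 1}"
      by blast
  qed (use assms in \<open>auto simp: skip_index_def\<close>)
qed

lemma square_plus_linear_span_skip:
  fixes \<beta> :: "nat \<Rightarrow> 'a::field"
  assumes char2: "(1::'a) + 1 = 0" and basis: "f2_basis t \<beta>" and "\<delta> \<noteq> 0"
  shows "\<exists>v. \<forall>i\<in>{1..t}. \<exists>J\<subseteq>{..<t - 1}. \<kappa> * ((\<beta> i)\<^sup>2 + \<delta> * \<beta> i) = (\<Sum>j\<in>J. v j)"
proof -
  let ?L = "\<lambda>i. \<kappa> * ((\<beta> i)\<^sup>2 + \<delta> * \<beta> i)"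
  from square_plus_linear_span[OF assms]
  obtain m where m: "m \<in> {1..t}" and span: "\<forall>i\<in>{1..t}. \<exists>S\<subseteq>{1..t} - {m}.
      (\<beta> i)\<^sup>2 + \<delta> * \<beta> i = (\<Sum>j\<in>S. (\<beta> j)\<^sup>2 + \<delta> * \<beta> j)"
    by (elim bexE)
  have "\<exists>J\<subseteq>{..<t - 1}. ?L i = sum (?L \<circ> skip_index m) J" if "i \<in> {1..t}" for i
  proof -
    from bspec[OF span that]
    obtain S where S: "S \<subseteq> {1..t} - {m}" "(\<beta> i)\<^sup>2 + \<delta> * \<beta> i = (\<Sum>j\<in>S. (\<beta> j)\<^sup>2 + \<delta> * \<beta> j)"
      by (elim exE conjE)
    from bij_betw_sum_subset[OF bij_betw_skip_index[OF m] S(1), of ?L]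
    obtain J where J: "J \<subseteq> {..<t - 1}" and sum_J: "sum (?L \<circ> skip_index m) J = sum ?L S"
      by (elim exE conjE)
    have "sum ?L S = ?L i"
      by (simp only: S(2) sum_distrib_left)
    with J sum_J show ?thesis
      by (intro exI[of _ J]) simp
  qed
  then show ?thesis
    by (intro exI[of _ "?L \<circ> skip_index m"]) simp
qed

lemma rs_trace_repair_scheme:
  fixes A :: "'a::{field,finite} set" and z :: "nat \<Rightarrow> 'a"
  assumes char2: "(1::'a) + 1 = 0" and card: "card (UNIV :: 'a set) = 2 ^ t" and "t \<ge> 1"
    and "k + 2 \<le> card A" and a0: "a0 \<in> A" and basis: "f2_basis t (\<lambda>i. a0 - z i)"
  shows "\<exists>b q R. linear_repair_scheme A (rs_code A k) a0 b q R
    \<and> bandwidth A a0 b = (card A - 1) * (t - 1)"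
proof -
  define \<beta> where "\<beta> i = a0 - z i" for i
  define g where "g i = smult (\<beta> i) [:- z i, 1:]" for i
  have poly_g: "poly (g i) x = (\<beta> i)\<^sup>2 + (x - a0) * \<beta> i" for i x
    by (simp add: g_def \<beta>_def power2_eq_square algebra_simps)
  define chk where "chk i \<alpha> = poly (g i) \<alpha> / lagrange_denom A \<alpha>" for i \<alpha>
  define T where "T = f2_coord t \<beta> 1" \<comment> \<open>plays the role of the field trace\<close>
  have basis: "f2_basis t \<beta>"
    using basis by (simp add: \<beta>_def[abs_def])
  have "\<exists>q R. linear_repair_scheme A (rs_code A k) a0 (\<lambda>_. t - 1) q R"
  proof (rule trace_repair_scheme[OF char2 finite a0, where I = "{1..t}" and chk = chk])
    show T_add: "T (x + y) = T x + T y" for x y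
      unfolding T_def by (rule f2_coord_add[OF char2 basis])
    show "\<exists>!x. \<forall>i\<in>{1..t}. T (chk i a0 * x) = u i" for u
    proof (rule trace_coordinates_unique[OF T_add])
      show "T (\<beta> 1) \<noteq> 0"
        using \<open>t \<ge> 1\<close> by (simp add: T_def f2_coord_basis[OF char2 basis])
      show "\<exists>S\<subseteq>{1..t}. y = (\<Sum>i\<in>S. chk i a0)" for y
      proof -
        have "1 / lagrange_denom A a0 \<noteq> 0"
          using lagrange_denom_nonzero[OF finite] by simp
        then obtain S where "S \<subseteq> {1..t}" "y = (\<Sum>i\<in>S. 1 / lagrange_denom A a0 * (\<beta> i)\<^sup>2)"
          using f2_basis_squares_span[OF char2 basis] by blast
        moreover have "\<dots> = (\<Sum>i\<in>S. chk i a0)"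
          by (simp add: chk_def poly_g)
        ultimately show ?thesis
          by auto
      qed
    qed (use card in simp_all)
    show "(\<Sum>\<alpha>\<in>A. chk i \<alpha> * c \<alpha>) = 0" if "c \<in> rs_code A k" for c i
    proof -
      have "degree (g i) \<le> 1"
        unfolding g_def by (rule order.trans[OF degree_smult_le]) simp
      then show ?thesis
        unfolding chk_def using \<open>k + 2 \<le> card A\<close>
        by (intro rs_code_dual[OF finite that]) linarith
    qed
    show "\<exists>v. \<forall>i\<in>{1..t}. \<exists>J\<subseteq>{..<t - 1}. chk i \<alpha> = (\<Sum>j\<in>J. v j)" if "\<alpha> \<in> A - {a0}" for \<alpha>
      using square_plus_linear_span_skip[OF char2 basis, of "\<alpha> - a0" "1 / lagrange_denom A \<alpha>"] that
      by (simp add: chk_def poly_g)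
  qed
  moreover have "bandwidth A a0 (\<lambda>_. t - 1) = (card A - 1) * (t - 1)"
    using a0 by (simp add: bandwidth_def)
  ultimately show ?thesis
    by blast
qed

section \<open>Optimality for \<open>n = |F|\<close> and \<open>r = 2\<close>\<close>

lemma linear_repair_scheme_zero:
  assumes "linear_repair_scheme A C a0 b q R"
  shows "q \<alpha> j 0 = 0" and "R (\<lambda>\<alpha> j. 0) = 0"
proof -
  have q: "q \<alpha> j (x + y) = q \<alpha> j x + q \<alpha> j y" for x y
    using assms unfolding linear_repair_scheme_def by blast
  have R: "R (\<lambda>\<alpha> j. d \<alpha> j + e \<alpha> j) = R d + R e" for d e
    using assms unfolding linear_repair_scheme_def by blast
  show "q \<alpha> j 0 = 0"
    using q[of 0 0] by simp
  show "R (\<lambda>\<alpha> j. 0) = 0"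
    using R[of "\<lambda>\<alpha> j. 0" "\<lambda>\<alpha> j. 0"] by (simp only: add_0 add_cancel_right_right)
qed

definition repair_kernel :: "('a \<Rightarrow> nat) \<Rightarrow> ('a \<Rightarrow> nat \<Rightarrow> 'a \<Rightarrow> bit) \<Rightarrow> 'a \<Rightarrow> 'a set" where
  "repair_kernel b q \<alpha> = {x. \<forall>j<b \<alpha>. q \<alpha> j x = 0}"

lemma card_UNIV_le_card_common_kernel:
  fixes q :: "nat \<Rightarrow> 'a::{ab_group_add,finite} \<Rightarrow> bit"
  assumes add: "\<And>j x y. q j (x + y) = q j x + q j y"
  shows "card (UNIV :: 'a set) \<le> card {x. \<forall>j<b. q j x = 0} * 2 ^ b"
proof -
  define h where "h x = (\<lambda>j. if j < b then q j x else 0)" for x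
  have "h (x + y) = h x + h y" for x y
    by (simp add: h_def add fun_eq_iff)
  then have "card (UNIV :: 'a set) = card (range h) * card {x. h x = 0}"
    by (rule card_UNIV_eq_card_image_mult_card_kernel)
  also have "{x. h x = 0} = {x. \<forall>j<b. q j x = 0}"
    by (auto simp: h_def fun_eq_iff)
  also have "card (range h) \<le> 2 ^ b"
  proof -
    have "inj_on (\<lambda>f. restrict f {..<b}) (range h)"
    proof (rule inj_onI)
      fix f g assume "f \<in> range h" "g \<in> range h" and eq: "restrict f {..<b} = restrict g {..<b}"
      then obtain x y where xy: "f = h x" "g = h y"
        by blast
      have "f j = g j" for j
      proof (cases "j < b")
        case True
        then show ?thesis
          using fun_cong[OF eq, of j] by simp
      qed (simp add: xy h_def)
      then show "f = g" ..
    qed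
    moreover have "(\<lambda>f. restrict f {..<b}) ` range h \<subseteq> {..<b} \<rightarrow>\<^sub>E (UNIV :: bit set)"
      by (intro image_subsetI) (simp add: restrict_PiE_iff)
    moreover have "finite ({..<b} \<rightarrow>\<^sub>E (UNIV :: bit set))"
      by (simp add: finite_PiE UNIV_bit)
    ultimately have "card (range h) \<le> card ({..<b} \<rightarrow>\<^sub>E (UNIV :: bit set))"
      by (rule card_inj_on_le)
    then show ?thesis
      by (simp add: card_funcset_bit)
  qed
  finally show ?thesis
    by (simp add: mult.commute)
qed

lemma le_add_pred_of_pow2_le:
  fixes t b v :: nat
  assumes "2 ^ t \<le> v * 2 ^ b"
  shows "t \<le> b + (v - 1)"
proof (cases "t \<le> b")
  case False
  then obtain e where e: "t = b + e"
    by (metis le_add_diff_inverse nle_le)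
  then have "2 ^ e \<le> v"
    using assms by (simp add: power_add)
  moreover have "e < 2 ^ e"
    by simp
  ultimately show ?thesis
    using e by linarith
qed simp

lemma rs_codeword_on_three_points:
  fixes a1 \<alpha> \<beta> :: "'a::{field,finite}"
  defines "\<mu> \<equiv> lagrange_denom (UNIV :: 'a set)"
  assumes char2: "(1::'a) + 1 = 0" and k: "k + 2 = card (UNIV :: 'a set)"
    and distinct: "\<alpha> \<noteq> \<beta>" "\<alpha> \<noteq> a1" "\<beta> \<noteq> a1"
    and eq: "(\<alpha> - a1) * (v / \<mu> \<alpha>) = (\<beta> - a1) * (w / \<mu> \<beta>)"
  shows "(\<lambda>\<gamma>. if \<gamma> = a1 then \<mu> a1 * (v / \<mu> \<alpha> + w / \<mu> \<beta>) else if \<gamma> = \<alpha> then v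
    else if \<gamma> = \<beta> then w else 0) \<in> rs_code UNIV k" (is "?c \<in> _")
proof -
  define x where "x = v / \<mu> \<alpha> + w / \<mu> \<beta>"
  have sum_c: "(\<Sum>\<gamma>\<in>UNIV. f \<gamma> * (?c \<gamma> / \<mu> \<gamma>)) = f a1 * x + f \<alpha> * (v / \<mu> \<alpha>) + f \<beta> * (w / \<mu> \<beta>)"
    for f :: "'a \<Rightarrow> 'a"
  proof -
    have "(\<Sum>\<gamma>\<in>UNIV. f \<gamma> * (?c \<gamma> / \<mu> \<gamma>)) = (\<Sum>\<gamma>\<in>{a1, \<alpha>, \<beta>}. f \<gamma> * (?c \<gamma> / \<mu> \<gamma>))"
      by (rule sum.mono_neutral_right) auto
    then show ?thesis
      using distinct by (simp add: \<mu>_def lagrange_denom_nonzero x_def add.assoc)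
  qed
  have "(\<Sum>\<gamma>\<in>UNIV. ?c \<gamma> / \<mu> \<gamma>) = x + x"
    using sum_c[of "\<lambda>_. 1"] by (simp add: x_def ac_simps)
  then have check0: "(\<Sum>\<gamma>\<in>UNIV. ?c \<gamma> / \<mu> \<gamma>) = 0"
    by (simp only: char2_add_self[OF char2])
  have "a1 * x + \<alpha> * (v / \<mu> \<alpha>) + \<beta> * (w / \<mu> \<beta>)
      = (\<alpha> + a1) * (v / \<mu> \<alpha>) + (\<beta> + a1) * (w / \<mu> \<beta>)"
    by (simp only: x_def distrib_left distrib_right ac_simps)
  also have "(\<alpha> + a1) * (v / \<mu> \<alpha>) = (\<beta> + a1) * (w / \<mu> \<beta>)"
    using eq by (simp only: char2_diff[OF char2])
  finally have "(\<Sum>\<gamma>\<in>UNIV. \<gamma> * (?c \<gamma> / \<mu> \<gamma>)) = (\<beta> + a1) * (w / \<mu> \<beta>) + (\<beta> + a1) * (w / \<mu> \<beta>)"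
    by (simp only: sum_c)
  then have check1: "(\<Sum>\<gamma>\<in>UNIV. \<gamma> * (?c \<gamma> / \<mu> \<gamma>)) = 0"
    by (simp only: char2_add_self[OF char2])
  show ?thesis
    using rs_code_of_dual_checks[of ?c] check0 check1 unfolding \<mu>_def by (simp add: k[symmetric])
qed

lemma repair_kernels_disjoint:
  fixes a1 \<alpha> \<beta> :: "'a::{field,finite}"
  defines "\<mu> \<equiv> lagrange_denom (UNIV :: 'a set)"
  assumes char2: "(1::'a) + 1 = 0" and k: "k + 2 = card (UNIV :: 'a set)"
    and scheme: "linear_repair_scheme UNIV (rs_code UNIV k) a1 b q R"
    and distinct: "\<alpha> \<noteq> \<beta>" "\<alpha> \<noteq> a1" "\<beta> \<noteq> a1"
    and v: "v \<in> repair_kernel b q \<alpha>" and w: "w \<in> repair_kernel b q \<beta>"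
    and eq: "(\<alpha> - a1) * (v / \<mu> \<alpha>) = (\<beta> - a1) * (w / \<mu> \<beta>)"
  shows "v = 0"
proof -
  have \<mu>: "\<mu> x \<noteq> 0" for x
    by (simp add: \<mu>_def lagrange_denom_nonzero)
  define c where "c \<gamma> = (if \<gamma> = a1 then \<mu> a1 * (v / \<mu> \<alpha> + w / \<mu> \<beta>) else if \<gamma> = \<alpha> then v
    else if \<gamma> = \<beta> then w else 0)" for \<gamma>
  have "c \<in> rs_code UNIV k"
    using rs_codeword_on_three_points[OF char2 k distinct eq[unfolded \<mu>_def]]
    unfolding c_def[abs_def] \<mu>_def .
  moreover have "download UNIV a1 b q c = (\<lambda>\<gamma> j. 0)"
  proof (intro ext)
    fix \<gamma> j
    have "c \<gamma> \<in> repair_kernel b q \<gamma>" if "\<gamma> \<noteq> a1"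
      using that v w linear_repair_scheme_zero(1)[OF scheme] by (auto simp: c_def repair_kernel_def)
    then show "download UNIV a1 b q c \<gamma> j = 0"
      by (simp add: download_def repair_kernel_def)
  qed
  ultimately have "\<mu> a1 * (v / \<mu> \<alpha> + w / \<mu> \<beta>) = 0"
    using scheme linear_repair_scheme_zero(2)[OF scheme]
    unfolding linear_repair_scheme_def by (metis c_def)
  then have "v / \<mu> \<alpha> = w / \<mu> \<beta>"
    using \<mu>[of a1] char2_add_eq_0_iff[OF char2] by simp
  moreover have "(\<alpha> - \<beta>) * u = (\<alpha> - a1) * u - (\<beta> - a1) * u" for u
    by (simp add: algebra_simps)
  ultimately have "(\<alpha> - \<beta>) * (v / \<mu> \<alpha>) = (\<alpha> - a1) * (v / \<mu> \<alpha>) - (\<beta> - a1) * (w / \<mu> \<beta>)"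
    by metis
  also have "\<dots> = 0"
    by (simp only: eq diff_self)
  finally have "(\<alpha> - \<beta>) * (v / \<mu> \<alpha>) = 0" .
  then show ?thesis
    using distinct \<mu>[of \<alpha>] by simp
qed

lemma sum_card_repair_kernels_le:
  fixes a1 :: "'a::{field,finite}"
  assumes char2: "(1::'a) + 1 = 0" and k: "k + 2 = card (UNIV :: 'a set)"
    and scheme: "linear_repair_scheme UNIV (rs_code UNIV k) a1 b q R"
  shows "(\<Sum>\<alpha>\<in>UNIV - {a1}. card (repair_kernel b q \<alpha>) - 1) \<le> card (UNIV :: 'a set) - 1"
proof -
  define \<psi> where "\<psi> \<alpha> v = (\<alpha> - a1) * (v / lagrange_denom UNIV \<alpha>)" for \<alpha> v :: 'a
  define E where "E \<alpha> = \<psi> \<alpha> ` (repair_kernel b q \<alpha> - {0})" for \<alpha>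
  have \<psi>_eq_0: "\<psi> \<alpha> v = 0 \<longleftrightarrow> v = 0" if "\<alpha> \<noteq> a1" for \<alpha> v
    using that by (simp add: \<psi>_def lagrange_denom_nonzero)
  have card_E: "card (E \<alpha>) = card (repair_kernel b q \<alpha>) - 1" if "\<alpha> \<noteq> a1" for \<alpha>
  proof -
    have "inj_on (\<psi> \<alpha>) (repair_kernel b q \<alpha> - {0})"
      using that by (intro inj_onI) (simp add: \<psi>_def lagrange_denom_nonzero)
    moreover have "0 \<in> repair_kernel b q \<alpha>"
      by (simp add: repair_kernel_def linear_repair_scheme_zero(1)[OF scheme])
    ultimately show ?thesis
      by (simp add: E_def card_image)
  qed
  have "E \<alpha> \<inter> E \<beta> = {}" if "\<alpha> \<in> UNIV - {a1}" "\<beta> \<in> UNIV - {a1}" "\<alpha> \<noteq> \<beta>" for \<alpha> \<beta>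
  proof (rule ccontr)
    assume "E \<alpha> \<inter> E \<beta> \<noteq> {}"
    then obtain v w where "v \<in> repair_kernel b q \<alpha>" "v \<noteq> 0" "w \<in> repair_kernel b q \<beta>"
      and "\<psi> \<alpha> v = \<psi> \<beta> w"
      by (auto simp: E_def)
    then show False
      using repair_kernels_disjoint[OF char2 k scheme, of \<alpha> \<beta> v w] that by (simp add: \<psi>_def)
  qed
  then have "(\<Sum>\<alpha>\<in>UNIV - {a1}. card (repair_kernel b q \<alpha>) - 1) = card (\<Union>\<alpha>\<in>UNIV - {a1}. E \<alpha>)"
    by (simp add: card_UN_disjoint card_E)
  also have "\<dots> \<le> card (UNIV - {0 :: 'a})"
    by (rule card_mono) (auto simp: E_def \<psi>_eq_0)
  also have "\<dots> = card (UNIV :: 'a set) - 1"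
    by (simp add: card_Diff_singleton)
  finally show ?thesis .
qed

lemma rs_repair_bandwidth_ge:
  fixes a1 :: "'a::{field,finite}"
  assumes char2: "(1::'a) + 1 = 0" and card: "card (UNIV :: 'a set) = 2 ^ t" and k: "k + 2 = 2 ^ t"
    and scheme: "linear_repair_scheme UNIV (rs_code UNIV k) a1 b q R"
  shows "(2 ^ t - 1) * (t - 1) \<le> bandwidth UNIV a1 b"
proof -
  have "t \<le> b \<alpha> + (card (repair_kernel b q \<alpha>) - 1)" for \<alpha>
  proof (rule le_add_pred_of_pow2_le)
    have "q \<alpha> j (x + y) = q \<alpha> j x + q \<alpha> j y" for j x y
      using scheme unfolding linear_repair_scheme_def by blast
    then show "2 ^ t \<le> card (repair_kernel b q \<alpha>) * 2 ^ b \<alpha>"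
      using card_UNIV_le_card_common_kernel[of "q \<alpha>" "b \<alpha>"] card by (simp add: repair_kernel_def)
  qed
  then have "(\<Sum>\<alpha>\<in>UNIV - {a1}. t) \<le> (\<Sum>\<alpha>\<in>UNIV - {a1}. b \<alpha> + (card (repair_kernel b q \<alpha>) - 1))"
    by (rule sum_mono)
  also have "\<dots> \<le> bandwidth UNIV a1 b + (2 ^ t - 1)"
    using sum_card_repair_kernels_le[OF char2 _ scheme] card k by (simp add: sum.distrib bandwidth_def)
  finally have "(2 ^ t - 1) * t \<le> bandwidth UNIV a1 b + (2 ^ t - 1)"
    using card by (simp add: card_Diff_singleton)
  moreover have "(2 ^ t - 1) * (t - 1) = (2 ^ t - 1) * t - (2 ^ t - 1)"
    by (simp add: diff_mult_distrib2)
  ultimately show ?thesis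
    by linarith
qed

theorem theorem2:
  fixes t n k :: nat and A :: "'a::{field,finite} set" and a0 :: 'a and z :: "nat \<Rightarrow> 'a"
  assumes char2: "(1::'a) + 1 = 0"
    and cardF: "card (UNIV :: 'a set) = 2 ^ t"
    and t1: "t \<ge> 1"
    and cardA: "card A = n"
    and r2: "k + 2 \<le> n"
    and a0A: "a0 \<in> A"
    and basis: "f2_basis t (\<lambda>i. a0 - z i)"
  defines "g \<equiv> (\<lambda>i. smult (a0 - z i) [:- z i, 1:])"
  shows "(\<forall>i\<in>{1..t}. degree (g i) \<le> n - k - 1)
       \<and> f2_rank ((\<lambda>i. poly (g i) a0) ` {1..t}) = t
       \<and> (\<Sum>\<alpha>\<in>A - {a0}. f2_rank ((\<lambda>i. poly (g i) \<alpha>) ` {1..t})) \<le> (n - 1) * (t - 1)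
       \<and> (\<exists>b q R. linear_repair_scheme A (rs_code A k) a0 b q R
                 \<and> bandwidth A a0 b \<le> (n - 1) * (t - 1))
       \<and> (n = 2 ^ t \<and> n - k = 2 \<longrightarrow>
           (\<forall>a1\<in>A. \<forall>b q R. linear_repair_scheme A (rs_code A k) a1 b q R
                 \<longrightarrow> bandwidth A a1 b \<ge> (n - 1) * (t - 1)))"
proof -
  define \<beta> where "\<beta> i = a0 - z i" for i
  have poly_g: "poly (g i) x = (\<beta> i)\<^sup>2 + (x - a0) * \<beta> i" for i x
    by (simp add: g_def \<beta>_def power2_eq_square algebra_simps)
  have "degree (g i) \<le> n - k - 1" for i
    using r2 degree_smult_le[of "a0 - z i" "[:- z i, 1:]"] by (simp add: g_def)
  moreover have "f2_rank ((\<lambda>i. poly (g i) a0) ` {1..t}) = t"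
    using f2_rank_basis_squares[OF char2 _ cardF] basis by (simp add: poly_g \<beta>_def[abs_def])
  moreover have "(\<Sum>\<alpha>\<in>A - {a0}. f2_rank ((\<lambda>i. poly (g i) \<alpha>) ` {1..t})) \<le> (n - 1) * (t - 1)"
  proof -
    have "(\<Sum>\<alpha>\<in>A - {a0}. f2_rank ((\<lambda>i. poly (g i) \<alpha>) ` {1..t})) \<le> (\<Sum>\<alpha>\<in>A - {a0}. t - 1)"
      using f2_rank_square_plus_linear_le[OF char2 cardF t1] by (intro sum_mono) (simp add: poly_g)
    then show ?thesis
      using cardA a0A by simp
  qed
  moreover have "\<exists>b q R. linear_repair_scheme A (rs_code A k) a0 b q R
      \<and> bandwidth A a0 b \<le> (n - 1) * (t - 1)"
    using rs_trace_repair_scheme[OF char2 cardF t1 _ a0A basis] r2 cardA by fastforce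
  moreover have "bandwidth A a1 b \<ge> (n - 1) * (t - 1)"
    if "n = 2 ^ t" "n - k = 2" "linear_repair_scheme A (rs_code A k) a1 b q R" for a1 b q R
  proof -
    have "A = UNIV"
      using cardA cardF that(1) by (simp add: card_eq_UNIV_imp_eq_UNIV)
    then show ?thesis
      using rs_repair_bandwidth_ge[OF char2 cardF, of k a1 b q R] that r2 by simp
  qed
  ultimately show ?thesis
    by blast
qed

end
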